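(* Let $B(z)=\sum_{n\ge0}b_nz^n$, where $b_n$ is the number of Motzkin paths of length $n$ that have no horizontal step on level equal to their height. Then $$B(z)=(1+v+v^2)(1-v^{-2})\sum_{h\ge1}(-1)^{h-1}\frac{v^{h}}{1-v^{h}}+\frac{(1+v)(1+v+v^2)}{v}.$$
   Context: A Motzkin path of length $n$ is a sequence of $n$ steps, each an up-step $(1,1)$, a down-step $(1,-1)$ or a horizontal step $(1,0)$, starting at $(0,0)$, ending at $(n,0)$, and never going below the $x$-axis. Its height $h$ is the maximal $y$-coordinate reached. A horizontal step on level $j$ is a horizontal step from $(x,j)$ to $(x+1,j)$. Here $v=v(z)=\frac{1-z-\sqrt{1-2z-3z^2}}{2z}$ is the formal power series with $v(0)=0$ satisfying $z=\frac{v}{1+v+v^2}$. *)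

theory Defs
  imports "HOL-Computational_Algebra.Formal_Power_Series"
          "HOL-Computational_Algebra.Formal_Laurent_Series"
begin

datatype step = U | D | H

fun step_val :: "step \<Rightarrow> int" where
  "step_val U = 1" | "step_val D = -1" | "step_val H = 0"

definition lvl :: "step list \<Rightarrow> nat \<Rightarrow> int" where
  "lvl p i = sum_list (map step_val (take i p))"

definition motzkin_path :: "step list \<Rightarrow> bool" where
  "motzkin_path p \<longleftrightarrow> (\<forall>i \<le> length p. 0 \<le> lvl p i) \<and> lvl p (length p) = 0"

definition height :: "step list \<Rightarrow> int" where
  "height p = Max {lvl p i | i. i \<le> length p}"

definition hstep_on_level :: "step list \<Rightarrow> int \<Rightarrow> bool" where
  "hstep_on_level p j \<longleftrightarrow> (\<exists>i < length p. p ! i = H \<and> lvl p i = j)"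

definition b_count :: "nat \<Rightarrow> nat" where
  "b_count n = card {p. length p = n \<and> motzkin_path p \<and> \<not> hstep_on_level p (height p)}"

end

theory Submission
  imports Defs
begin

(* Sort the paths by their height h. A path of height h with no horizontal step on level h is
   a path confined to the strip 0..h with no horizontal step on its top level, but not one
   confined to the strip 0..h-1. Paths in a strip satisfy the first-step (transfer) recursion,
   and with z = v/(1+v+v^2) it is solved in closed form: the generating function of walks from
   level a down to 0 is (1+v+v^2)(v^a - v^(m-a))/(1 - v^(m+2)), where m = 2h+1 if the top level
   carries no horizontal steps and m = 2h+2 otherwise. Summing over h telescopes into the
   alternating Lambert series; only finitely many of its terms matter for each coefficient,
   since v^(h+1)/(1 - v^(h+1)) has no coefficients below degree h+1. *)

subsection \<open>Walks in a strip\<close>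

text \<open>Walks are read from their start level \<open>a\<close> down to level 0, so that the first-step
  decomposition is structural recursion; \<open>capped\<close> forbids horizontal steps on the top level.\<close>

fun strip_path :: "bool \<Rightarrow> nat \<Rightarrow> nat \<Rightarrow> step list \<Rightarrow> bool" where
  "strip_path capped h a [] \<longleftrightarrow> a = 0"
| "strip_path capped h a (s # p) \<longleftrightarrow> (case s of
      U \<Rightarrow> a < h \<and> strip_path capped h (Suc a) p
    | D \<Rightarrow> 0 < a \<and> strip_path capped h (a - 1) p
    | H \<Rightarrow> \<not> (capped \<and> a = h) \<and> strip_path capped h a p)"

definition strip_count :: "bool \<Rightarrow> nat \<Rightarrow> nat \<Rightarrow> nat \<Rightarrow> nat" where
  "strip_count capped h n a = card {p. length p = n \<and> strip_path capped h a p}"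

definition strip_transfer :: "bool \<Rightarrow> nat \<Rightarrow> (nat \<Rightarrow> 'a::comm_monoid_add) \<Rightarrow> nat \<Rightarrow> 'a" where
  "strip_transfer capped h f a =
     (if capped \<and> a = h then 0 else f a) + (if a < h then f (Suc a) else 0)
     + (if 0 < a then f (a - 1) else 0)"

lemma strip_transfer_cong:
  assumes "a \<le> h" and "\<And>b. b \<le> h \<Longrightarrow> f b = g b"
  shows "strip_transfer capped h f a = strip_transfer capped h g a"
  using assms by (simp add: strip_transfer_def)

lemma finite_step_lists_length: "finite {p :: step list. length p = n \<and> P p}"
proof (rule finite_subset)
  show "{p :: step list. length p = n \<and> P p} \<subseteq> {p. set p \<subseteq> {U, D, H} \<and> length p = n}"
    by (auto intro: step.exhaust)
  show "finite {p. set p \<subseteq> {U, D, H} \<and> length p = n}"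
    by (rule finite_lists_length_eq) simp
qed

lemma strip_count_0: "strip_count capped h 0 a = (if a = 0 then 1 else 0)"
proof -
  have "{p. length p = 0 \<and> strip_path capped h a p} = (if a = 0 then {[]} else {})"
    by auto
  then show ?thesis
    by (simp add: strip_count_def)
qed

lemma strip_count_Suc:
  "strip_count capped h (Suc n) a = strip_transfer capped h (strip_count capped h n) a"
proof -
  let ?S = "\<lambda>b. {p. length p = n \<and> strip_path capped h b p}"
  let ?H = "Cons H ` {p \<in> ?S a. \<not> (capped \<and> a = h)}"
  let ?U = "Cons U ` {p \<in> ?S (Suc a). a < h}"
  let ?D = "Cons D ` {p \<in> ?S (a - 1). 0 < a}"
  have split: "{p. length p = Suc n \<and> strip_path capped h a p} = ?H \<union> ?U \<union> ?D"
  proof (intro equalityI subsetI)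
    fix p
    assume "p \<in> {p. length p = Suc n \<and> strip_path capped h a p}"
    then obtain s q where "p = s # q" "length q = n" "strip_path capped h a (s # q)"
      by (cases p) auto
    then show "p \<in> ?H \<union> ?U \<union> ?D"
      by (cases s) auto
  qed auto
  have card_guard: "card {p \<in> ?S b. P} = (if P then card (?S b) else 0)" for b P
    by auto
  have "card (?H \<union> ?U \<union> ?D) = card ?H + card ?U + card ?D"
    by (subst card_Un_disjoint; (subst card_Un_disjoint)?) (auto intro: finite_step_lists_length)
  then show ?thesis
    by (simp add: strip_count_def strip_transfer_def split card_image card_guard)
qed

subsection \<open>Strip walks and Motzkin paths\<close>

lemma lvl_0 [simp]: "lvl p 0 = 0"
  by (simp add: lvl_def)

lemma lvl_Cons_Suc [simp]: "lvl (s # p) (Suc i) = step_val s + lvl p i"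
  by (simp add: lvl_def)

lemma All_le_Suc2: "(\<forall>i \<le> Suc n. P i) \<longleftrightarrow> P 0 \<and> (\<forall>i \<le> n. P (Suc i))"
  by (metis Suc_le_mono le0 not0_implies_Suc)

lemma strip_path_iff_levels:
  assumes "a \<le> h"
  shows "strip_path capped h a p \<longleftrightarrow>
           (\<forall>i \<le> length p. 0 \<le> int a + lvl p i \<and> int a + lvl p i \<le> int h)
         \<and> int a + lvl p (length p) = 0
         \<and> (capped \<longrightarrow> \<not> (\<exists>i < length p. p ! i = H \<and> int a + lvl p i = int h))"
  using assms
proof (induction p arbitrary: a)
  case Nil
  then show ?case by auto
next
  case (Cons s p)
  show ?case
  proof (cases s)
    case U
    show ?thesis
    proof (cases "a < h")
      case True
      then show ?thesis
        using Cons.IH[of "Suc a"] U by (simp add: All_le_Suc2 Ex_less_Suc2 algebra_simps)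
    next
      case False
      then have "\<not> int a + lvl (s # p) 1 \<le> int h"
        using U Cons.prems by (simp add: lvl_def)
      then show ?thesis
        using False U by (auto simp: All_le_Suc2)
    qed
  next
    case D
    show ?thesis
    proof (cases "0 < a")
      case True
      then show ?thesis
        using Cons.IH[of "a - 1"] D Cons.prems
        by (simp add: All_le_Suc2 Ex_less_Suc2 algebra_simps of_nat_diff)
    next
      case False
      then have "\<not> 0 \<le> int a + lvl (s # p) 1"
        using D by (simp add: lvl_def)
      then show ?thesis
        using False D by (auto simp: All_le_Suc2)
    qed
  next
    case H
    then show ?thesis
      using Cons.IH[of a] Cons.prems by (auto simp: All_le_Suc2 Ex_less_Suc2)
  qed
qed

lemma lvl_le_length: "lvl p i \<le> int (length p)"
proof (induction p arbitrary: i)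
  case Nil
  then show ?case by (simp add: lvl_def)
next
  case (Cons s p)
  have "step_val s \<le> 1"
    by (cases s) auto
  with Cons.IH show ?case
    by (cases i) (auto intro: add_mono)
qed

lemma height_eq_Max_image: "height p = Max (lvl p ` {..length p})"
  unfolding height_def by (simp add: image_Collect atMost_def)

lemma height_le_iff: "height p \<le> c \<longleftrightarrow> (\<forall>i \<le> length p. lvl p i \<le> c)"
  unfolding height_eq_Max_image by (subst Max_le_iff) auto

lemma lvl_le_height: "i \<le> length p \<Longrightarrow> lvl p i \<le> height p"
  unfolding height_eq_Max_image by (rule Max_ge) auto

lemma height_nonneg: "0 \<le> height p"
  using lvl_le_height[of 0 p] by simp

lemma height_le_length: "height p \<le> int (length p)"
  using lvl_le_length height_le_iff by blast

lemma strip_path_0_iff: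
  "strip_path capped h 0 p \<longleftrightarrow>
     motzkin_path p \<and> height p \<le> int h \<and> (capped \<longrightarrow> \<not> hstep_on_level p (int h))"
  by (subst strip_path_iff_levels) (auto simp: motzkin_path_def height_le_iff hstep_on_level_def)

lemma strip_path_mono_capped:
  assumes "strip_path False h 0 p"
  shows "strip_path True (Suc h) 0 p"
proof -
  have path: "motzkin_path p" "height p \<le> int h"
    using assms by (auto simp: strip_path_0_iff)
  have "\<not> hstep_on_level p (int (Suc h))"
  proof
    assume "hstep_on_level p (int (Suc h))"
    then obtain i where "i < length p" "lvl p i = int (Suc h)"
      by (auto simp: hstep_on_level_def)
    with lvl_le_height[of i p] path(2) show False
      by simp
  qed
  with path show ?thesis
    by (simp add: strip_path_0_iff)
qed

definition b_paths :: "nat \<Rightarrow> nat \<Rightarrow> step list set" where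
  "b_paths n h = {p. length p = n \<and> motzkin_path p \<and> \<not> hstep_on_level p (height p)
                     \<and> height p = int h}"

lemma b_paths_0: "b_paths n 0 = {p. length p = n \<and> strip_path True 0 0 p}"
  unfolding b_paths_def strip_path_0_iff by (auto; metis antisym height_nonneg)

lemma b_paths_Suc:
  "b_paths n (Suc h) =
     {p. length p = n \<and> strip_path True (Suc h) 0 p} - {p. length p = n \<and> strip_path False h 0 p}"
  unfolding b_paths_def strip_path_0_iff by (auto; smt (verit))

lemma card_b_paths_Suc:
  "(of_nat (card (b_paths n (Suc h))) :: 'a::comm_ring_1) =
     of_nat (strip_count True (Suc h) n 0) - of_nat (strip_count False h n 0)"
proof -
  have sub: "{p. length p = n \<and> strip_path False h 0 p} \<subseteq> {p. length p = n \<and> strip_path True (Suc h) 0 p}"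
    using strip_path_mono_capped by auto
  then have "card (b_paths n (Suc h)) = strip_count True (Suc h) n 0 - strip_count False h n 0"
    unfolding b_paths_Suc strip_count_def by (intro card_Diff_subset finite_step_lists_length)
  moreover have "strip_count False h n 0 \<le> strip_count True (Suc h) n 0"
    unfolding strip_count_def by (rule card_mono[OF finite_step_lists_length sub])
  ultimately show ?thesis
    by (simp add: of_nat_diff)
qed

lemma b_count_eq_sum_heights:
  assumes "n \<le> N"
  shows "b_count n = (\<Sum>h \<le> N. card (b_paths n h))"
proof -
  have "{p. length p = n \<and> motzkin_path p \<and> \<not> hstep_on_level p (height p)} = (\<Union>h \<le> N. b_paths n h)"
  proof (intro equalityI subsetI)
    fix p
    assume p: "p \<in> {p. length p = n \<and> motzkin_path p \<and> \<not> hstep_on_level p (height p)}"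
    have "height p = int (nat (height p))" "nat (height p) \<le> N"
      using height_nonneg height_le_length[of p] p assms by auto
    then show "p \<in> (\<Union>h \<le> N. b_paths n h)"
      using p unfolding b_paths_def by force
  qed (auto simp: b_paths_def)
  then have "b_count n = card (\<Union>h \<le> N. b_paths n h)"
    by (simp add: b_count_def)
  also have "\<dots> = (\<Sum>h \<le> N. card (b_paths n h))"
    by (rule card_UN_disjoint)
       (auto simp: b_paths_def intro: finite_subset[OF _ finite_step_lists_length[of n "\<lambda>_. True"]])
  finally show ?thesis .
qed

subsection \<open>Generating functions of strip walks\<close>

definition strip_exponent :: "bool \<Rightarrow> nat \<Rightarrow> nat" where
  "strip_exponent capped h = (if capped then 2 * h + 1 else 2 * h + 2)"

lemma three_term_identity:
  fixes V :: "'a::comm_ring_1"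
  assumes "1 \<le> b" "1 \<le> c"
  shows "(1 + V + V^2) * (V^b - V^c) =
           V * ((V^(b - 1) - V^(c + 1)) + (V^b - V^c) + (V^(b + 1) - V^(c - 1)))"
proof -
  obtain b' c' where "b = Suc b'" "c = Suc c'"
    using assms by (metis Suc_le_D One_nat_def)
  then show ?thesis
    by (simp add: algebra_simps power2_eq_square)
qed

lemma three_term_identity_0:
  fixes V :: "'a::comm_ring_1"
  assumes "1 \<le> c"
  shows "(1 + V + V^2) * (1 - V^c) = (1 - V^(c + 2)) + V * ((1 - V^c) + (V - V^(c - 1)))"
proof -
  obtain c' where "c = Suc c'"
    using assms by (metis Suc_le_D One_nat_def)
  then show ?thesis
    by (simp add: algebra_simps power2_eq_square)
qed

text \<open>\<open>u\<^sub>a = V^a - V^(m-a)\<close> solves the unrestricted recursion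
  \<open>(1 + V + V^2) u\<^sub>a = V (u\<^sub>a\<^sub>-\<^sub>1 + u\<^sub>a + u\<^sub>a\<^sub>+\<^sub>1)\<close>. The choice of \<open>m\<close> gives
  \<open>u\<^sub>h\<^sub>+\<^sub>1 = 0\<close> (uncapped) or \<open>u\<^sub>h\<^sub>+\<^sub>1 = -u\<^sub>h\<close> (capped), which accounts for the top
  boundary, and the missing term \<open>V u\<^sub>-\<^sub>1 = 1 - V^(m+2)\<close> produces the source at \<open>a = 0\<close>.\<close>

lemma strip_numerator_transfer:
  fixes V :: "'a::comm_ring_1" and capped :: bool and h a :: nat
  defines "m \<equiv> strip_exponent capped h"
  assumes "a \<le> h"
  shows "(1 + V + V^2) * (V^a - V^(m - a)) =
           (if a = 0 then 1 - V^(m + 2) else 0)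
         + V * strip_transfer capped h (\<lambda>b. V^b - V^(m - b)) a"
proof (cases "a < h")
  case True
  then have "m - a \<ge> 2"
    by (auto simp: m_def strip_exponent_def)
  show ?thesis
  proof (cases "a = 0")
    case True
    then show ?thesis
      using three_term_identity_0[of "m" V] \<open>m - a \<ge> 2\<close> \<open>a < h\<close>
      by (simp add: strip_transfer_def)
  next
    case False
    then have "m - (a - 1) = m - a + 1" "m - (a + 1) = m - a - 1"
      using \<open>m - a \<ge> 2\<close> by auto
    with False show ?thesis
      using three_term_identity[of a "m - a" V] \<open>m - a \<ge> 2\<close> \<open>a < h\<close>
      by (simp add: strip_transfer_def algebra_simps)
  qed
next
  case False
  then have "a = h"
    using assms(2) by simp
  show ?thesis
  proof (cases "a = 0")
    case True
    then show ?thesis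
      using three_term_identity_0[of m V] \<open>a = h\<close>
      by (cases capped) (auto simp: m_def strip_exponent_def strip_transfer_def)
  next
    case False
    then show ?thesis
      using three_term_identity[of a "m - a" V] \<open>a = h\<close>
      by (cases capped) (auto simp: m_def strip_exponent_def strip_transfer_def algebra_simps eval_nat_numeral)
  qed
qed

lemma strip_transfer_mult_left:
  fixes f :: "nat \<Rightarrow> 'a::semiring_0"
  shows "strip_transfer capped h (\<lambda>b. k * f b) a = k * strip_transfer capped h f a"
  by (simp add: strip_transfer_def distrib_left)

lemma strip_transfer_nth:
  "strip_transfer capped h F a $ n = strip_transfer capped h (\<lambda>b. F b $ n) a"
  by (simp add: strip_transfer_def)

lemma of_nat_strip_transfer:
  "of_nat (strip_transfer capped h f a) = strip_transfer capped h (\<lambda>b. of_nat (f b)) a"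
  by (simp add: strip_transfer_def)

definition strip_gf :: "'a::field fps \<Rightarrow> bool \<Rightarrow> nat \<Rightarrow> nat \<Rightarrow> 'a fps" where
  "strip_gf v capped h a =
     (1 + v + v^2) * (v^a - v^(strip_exponent capped h - a)) / (1 - v^(strip_exponent capped h + 2))"

lemma strip_gf_transfer:
  fixes v :: "'a::field fps"
  assumes v0: "v $ 0 = 0" and X: "fps_X * (1 + v + v^2) = v" and "a \<le> h"
  shows "strip_gf v capped h a =
           (if a = 0 then 1 else 0) + fps_X * strip_transfer capped h (strip_gf v capped h) a"
proof -
  define m where "m = strip_exponent capped h"
  define Q where "Q = 1 + v + v^2"
  define I where "I = inverse (1 - v^(m + 2))"
  define u where "u b = v^b - v^(m - b)" for b
  have DI: "(1 - v^(m + 2)) * I = 1"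
    unfolding I_def by (rule inverse_mult_eq_1') (simp add: startsby_zero_power v0)
  have W: "strip_gf v capped h = (\<lambda>b. Q * I * u b)"
    by (auto simp: strip_gf_def fps_divide_unit startsby_zero_power v0 m_def Q_def I_def u_def
        mult_ac)
  have "strip_gf v capped h a = I * (Q * u a)"
    by (simp add: W mult_ac)
  also have "Q * u a = (if a = 0 then 1 - v^(m + 2) else 0) + v * strip_transfer capped h u a"
    unfolding Q_def u_def m_def by (rule strip_numerator_transfer[OF assms(3)])
  also have "I * \<dots> = (if a = 0 then 1 else 0) + (fps_X * Q) * (I * strip_transfer capped h u a)"
    using DI by (simp add: X[folded Q_def] algebra_simps)
  also have "\<dots> = (if a = 0 then 1 else 0) + fps_X * strip_transfer capped h (strip_gf v capped h) a"
    by (simp add: W strip_transfer_mult_left mult_ac)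
  finally show ?thesis .
qed

lemma strip_gf_nth:
  fixes v :: "'a::field fps"
  assumes v0: "v $ 0 = 0" and X: "fps_X * (1 + v + v^2) = v"
  shows "a \<le> h \<Longrightarrow> strip_gf v capped h a $ n = of_nat (strip_count capped h n a)"
proof (induction n arbitrary: a)
  case 0
  show ?case
    by (subst strip_gf_transfer[OF v0 X 0]) (simp add: strip_count_0)
next
  case (Suc n)
  have "strip_gf v capped h a $ Suc n = strip_transfer capped h (\<lambda>b. strip_gf v capped h b $ n) a"
    by (subst strip_gf_transfer[OF v0 X Suc.prems]) (simp add: strip_transfer_nth)
  also have "\<dots> = strip_transfer capped h (\<lambda>b. of_nat (strip_count capped h n b)) a"
    using Suc.prems by (rule strip_transfer_cong) (rule Suc.IH)
  also have "\<dots> = of_nat (strip_count capped h (Suc n) a)"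
    by (simp add: strip_count_Suc of_nat_strip_transfer)
  finally show ?case .
qed

subsection \<open>The telescoping sum over heights\<close>

definition strip_ratio :: "'a::field \<Rightarrow> nat \<Rightarrow> 'a" where
  "strip_ratio V m = (1 + V + V^2) * (1 - V^m) / (1 - V^(m + 2))"

lemma strip_ratio_1:
  fixes V :: "'a::field"
  assumes "1 - V \<noteq> 0" "1 - V^2 \<noteq> 0" "1 - V^3 \<noteq> 0"
  shows "V^2 * strip_ratio V 1 =
           (1 + V + V^2) * (V^2 - 1) * (V / (1 - V) - V^2 / (1 - V^2) + V^3 / (1 - V^3))
         + (1 + V) * (1 + V + V^2) * V"
proof -
  have "(1 - V) * inverse (1 - V) = 1" "(1 - V^2) * inverse (1 - V^2) = 1"
       "(1 - V^3) * inverse (1 - V^3) = 1"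
    using assms by auto
  then show ?thesis
    unfolding strip_ratio_def divide_inverse by algebra
qed

lemma strip_ratio_diff:
  fixes V y :: "'a::field"
  assumes "1 - y * V^2 \<noteq> 0" "1 - y * V^3 \<noteq> 0"
  shows "V^2 * ((1 + V + V^2) * (1 - y * V) / (1 - y * V^3) - (1 + V + V^2) * (1 - y) / (1 - y * V^2))
           = (1 + V + V^2) * (V^2 - 1) * (- (y * V^2) / (1 - y * V^2) + y * V^3 / (1 - y * V^3))"
proof -
  have "(1 - y * V^2) * inverse (1 - y * V^2) = 1" "(1 - y * V^3) * inverse (1 - y * V^3) = 1"
    using assms by auto
  then show ?thesis
    unfolding divide_inverse by algebra
qed

lemma strip_ratio_sum_telescopes:
  fixes V :: "'a::field"
  assumes nz: "\<And>k. 0 < k \<Longrightarrow> 1 - V^k \<noteq> 0"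
  shows "V^2 * (strip_ratio V 1 + (\<Sum>h<N. strip_ratio V (2 * h + 3) - strip_ratio V (2 * h + 2)))
           = (1 + V + V^2) * (V^2 - 1) * (\<Sum>h<2 * N + 3. (-1)^h * V^(Suc h) / (1 - V^(Suc h)))
           + (1 + V) * (1 + V + V^2) * V"
proof (induction N)
  case 0
  have "(\<Sum>h<3. (-1)^h * V^(Suc h) / (1 - V^(Suc h))) = V / (1 - V) - V^2 / (1 - V^2) + V^3 / (1 - V^3)"
    by (simp add: eval_nat_numeral)
  moreover have "1 - V \<noteq> 0"
    using nz[of 1] by simp
  ultimately show ?case
    using strip_ratio_1[of V] nz[of 2] nz[of 3] by simp
next
  case (Suc N)
  define y where "y = V^(2 * N + 2)"
  have pow: "V^(2 * N + 2) = y" "V^(2 * N + 3) = y * V" "V^(2 * N + 4) = y * V^2" "V^(2 * N + 5) = y * V^3"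
    by (simp_all add: y_def eval_nat_numeral mult_ac)
  have new_terms: "(\<Sum>h<2 * Suc N + 3. (-1)^h * V^(Suc h) / (1 - V^(Suc h)))
      = (\<Sum>h<2 * N + 3. (-1)^h * V^(Suc h) / (1 - V^(Suc h)))
        + (- (y * V^2) / (1 - y * V^2) + y * V^3 / (1 - y * V^3))"
  proof -
    have "2 * Suc N + 3 = Suc (Suc (2 * N + 3))"
      by simp
    moreover have "V^(Suc (2 * N + 3)) = y * V^2" "V^(Suc (Suc (2 * N + 3))) = y * V^3"
      using pow(3,4) by (simp_all only: Suc_eq_plus1 add.assoc numeral_plus_one semiring_norm)
    moreover have "(-1::'a)^(2 * N + 3) = -1" "(-1::'a)^(Suc (2 * N + 3)) = 1"
      by (simp_all add: power_add power_mult)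
    ultimately show ?thesis
      by (simp only: sum.lessThan_Suc) simp
  qed
  have "1 - y * V^2 \<noteq> 0" "1 - y * V^3 \<noteq> 0"
    using nz[of "2 * N + 4"] nz[of "2 * N + 5"] by (simp_all add: pow)
  moreover have "strip_ratio V (2 * N + 3) = (1 + V + V^2) * (1 - y * V) / (1 - y * V^3)"
                "strip_ratio V (2 * N + 2) = (1 + V + V^2) * (1 - y) / (1 - y * V^2)"
    by (simp_all only: strip_ratio_def add.assoc numeral_plus_numeral semiring_norm pow)
  ultimately have last_term: "V^2 * (strip_ratio V (2 * N + 3) - strip_ratio V (2 * N + 2))
      = (1 + V + V^2) * (V^2 - 1) * (- (y * V^2) / (1 - y * V^2) + y * V^3 / (1 - y * V^3))"
    using strip_ratio_diff by simp
  have "V^2 * (strip_ratio V 1 + (\<Sum>h<Suc N. strip_ratio V (2 * h + 3) - strip_ratio V (2 * h + 2)))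
      = V^2 * (strip_ratio V 1 + (\<Sum>h<N. strip_ratio V (2 * h + 3) - strip_ratio V (2 * h + 2)))
        + V^2 * (strip_ratio V (2 * N + 3) - strip_ratio V (2 * N + 2))"
    by (simp only: sum.lessThan_Suc distrib_left add.assoc)
  then show ?case
    unfolding Suc.IH last_term new_terms by (simp only: distrib_left add_ac)
qed

subsection \<open>Passing to the infinite series\<close>

lemma fps_to_fls_sum: "fps_to_fls (sum f A) = (\<Sum>x\<in>A. fps_to_fls (f x))"
  by (induction A rule: infinite_finite_induct) auto

lemma fps_mult_nth_cong:
  fixes c f g :: "'a::semiring_0 fps"
  assumes "\<And>i. i \<le> n \<Longrightarrow> f $ i = g $ i"
  shows "(c * f) $ n = (c * g) $ n"
  unfolding fps_mult_nth using assms by (intro sum.cong) auto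

lemma subdegree_one_minus_power:
  fixes v :: "'a::field fps"
  assumes "v $ 0 = 0" and "0 < k"
  shows "subdegree (1 - v^k) = 0"
  using assms by (intro subdegree_eq_0) (simp add: startsby_zero_power)

lemma fps_to_fls_strip_gf_0:
  fixes v :: "'a::field fps"
  assumes "v $ 0 = 0"
  shows "fps_to_fls (strip_gf v capped h 0) = strip_ratio (fps_to_fls v) (strip_exponent capped h)"
  using subdegree_one_minus_power[OF assms, of "strip_exponent capped h + 2"]
  by (simp add: strip_gf_def strip_ratio_def fps_to_fls_power fls_times_fps_to_fls
      flip: fls_divide_fps_to_fls)

lemma fps_to_fls_alt_term:
  fixes v :: "'a::field fps"
  assumes "v $ 0 = 0"
  shows "fps_to_fls ((-1)^h * v^(Suc h) / (1 - v^(Suc h))) =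
           (-1)^h * fps_to_fls v ^ Suc h / (1 - fps_to_fls v ^ Suc h)"
  using subdegree_one_minus_power[OF assms, of "Suc h"]
  by (simp add: fps_to_fls_power fls_times_fps_to_fls flip: fls_divide_fps_to_fls)

definition b_partial_gf :: "'a::field fps \<Rightarrow> nat \<Rightarrow> 'a fps" where
  "b_partial_gf v N = strip_gf v True 0 0 + (\<Sum>h<N. strip_gf v True (Suc h) 0 - strip_gf v False h 0)"

lemma b_partial_gf_nth:
  fixes v :: "'a::field fps"
  assumes v0: "v $ 0 = 0" and X: "fps_X * (1 + v + v^2) = v" and "n \<le> N"
  shows "b_partial_gf v N $ n = of_nat (b_count n)"
proof -
  have "(of_nat (b_count n) :: 'a) = (\<Sum>h \<le> N. of_nat (card (b_paths n h)))"
    by (simp add: b_count_eq_sum_heights[OF assms(3)])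
  also have "\<dots> = of_nat (card (b_paths n 0)) + (\<Sum>h<N. of_nat (card (b_paths n (Suc h))))"
    by (rule sum.atMost_shift)
  also have "\<dots> = b_partial_gf v N $ n"
    by (simp add: b_partial_gf_def fps_sum_nth strip_gf_nth[OF v0 X] b_paths_0 strip_count_def
        card_b_paths_Suc)
  finally show ?thesis ..
qed

lemma b_partial_gf_closed_form:
  fixes v :: "'a::field fps"
  assumes v0: "v $ 0 = 0"
  shows "v^2 * b_partial_gf v N =
           (1 + v + v^2) * (v^2 - 1) * (\<Sum>h<2 * N + 3. (-1)^h * v^(Suc h) / (1 - v^(Suc h)))
         + (1 + v) * (1 + v + v^2) * v"
proof -
  have nz: "1 - fps_to_fls v ^ k \<noteq> 0" if "0 < k" for k
  proof -
    have "(1 - v^k) $ 0 \<noteq> 0"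
      using v0 that by (simp add: startsby_zero_power)
    then have "fps_to_fls (1 - v^k) \<noteq> 0"
      by auto
    then show ?thesis
      by (simp add: fps_to_fls_power)
  qed
  have exps: "strip_exponent True 0 = 1" "strip_exponent True (Suc h) = 2 * h + 3"
             "strip_exponent False h = 2 * h + 2" for h
    by (simp_all add: strip_exponent_def)
  from strip_ratio_sum_telescopes[OF nz, of N]
  have "fps_to_fls (v^2 * b_partial_gf v N) =
          fps_to_fls ((1 + v + v^2) * (v^2 - 1) * (\<Sum>h<2 * N + 3. (-1)^h * v^(Suc h) / (1 - v^(Suc h)))
                      + (1 + v) * (1 + v + v^2) * v)"
    by (simp add: b_partial_gf_def fps_to_fls_sum fls_times_fps_to_fls fps_to_fls_power
        fps_to_fls_strip_gf_0[OF v0] fps_to_fls_alt_term[OF v0] exps del: power_Suc)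
  then show ?thesis
    by (simp only: fps_to_fls_eq_iff)
qed

lemma alt_term_nth_eq_0:
  fixes v :: "'a::field fps"
  assumes v0: "v $ 0 = 0" and "n \<le> h"
  shows "((-1)^h * v^(Suc h) / (1 - v^(Suc h))) $ n = 0"
proof -
  have "(1 - v^(Suc h)) $ 0 \<noteq> 0"
    using v0 by (simp add: startsby_zero_power)
  then have "(-1)^h * v^(Suc h) / (1 - v^(Suc h)) = v^(Suc h) * ((-1)^h * inverse (1 - v^(Suc h)))"
    by (simp add: fps_divide_unit mult_ac)
  also have "\<dots> $ n = 0"
    unfolding fps_mult_nth using startsby_zero_power_prefix[OF v0, of "Suc h"] assms(2)
    by (intro sum.neutral) auto
  finally show ?thesis .
qed

lemma alt_series_nth:
  fixes v :: "'a::field fps"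
  assumes v0: "v $ 0 = 0" and "n < K"
  shows "(\<Sum>h. (-1)^h * v^(Suc h) / (1 - v^(Suc h))) $ n =
           (\<Sum>h<K. (-1)^h * v^(Suc h) / (1 - v^(Suc h))) $ n"
proof -
  define T where "T = (\<lambda>h. (-1)^h * v^(Suc h) / (1 - v^(Suc h)))"
  have truncate: "(\<Sum>h<K'. T h $ m) = (\<Sum>h<Suc m. T h $ m)" if "m < K'" for K' m
    using that alt_term_nth_eq_0[OF v0] by (intro sum.mono_neutral_right) (auto simp: T_def)
  define S where "S = Abs_fps (\<lambda>m. \<Sum>h<Suc m. T h $ m)"
  have "T sums S"
    unfolding sums_def
  proof (rule tendsto_fpsI)
    fix m
    show "eventually (\<lambda>K'. (\<Sum>h<K'. T h) $ m = S $ m) sequentially"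
      using eventually_gt_at_top[of m]
      by eventually_elim (simp add: fps_sum_nth S_def truncate)
  qed
  then have "suminf T = S"
    by (rule sums_unique[symmetric])
  then show ?thesis
    unfolding T_def[symmetric] using truncate[OF assms(2)] by (simp add: S_def fps_sum_nth)
qed

lemma b_gf_identity:
  fixes v :: "'a::field fps"
  assumes v0: "v $ 0 = 0" and X: "fps_X * (1 + v + v^2) = v"
  shows "v^2 * Abs_fps (\<lambda>n. of_nat (b_count n)) =
           (1 + v + v^2) * (v^2 - 1) * (\<Sum>h. (-1)^h * v^(Suc h) / (1 - v^(Suc h)))
         + (1 + v) * (1 + v + v^2) * v"
    (is "v^2 * ?B = ?Q * ?S + ?R")
proof (rule fps_ext)
  fix n
  let ?S' = "\<Sum>h<2 * n + 3. (-1)^h * v^(Suc h) / (1 - v^(Suc h))"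
  have "(v^2 * ?B) $ n = (v^2 * b_partial_gf v n) $ n"
    by (rule fps_mult_nth_cong) (simp add: b_partial_gf_nth[OF v0 X])
  also have "\<dots> = (?Q * ?S') $ n + ?R $ n"
    by (simp add: b_partial_gf_closed_form[OF v0])
  also have "(?Q * ?S') $ n = (?Q * ?S) $ n"
    by (rule fps_mult_nth_cong, rule sym, rule alt_series_nth[OF v0]) simp
  finally show "(v^2 * ?B) $ n = (?Q * ?S + ?R) $ n"
    by simp
qed

theorem mainTheorem5:
  fixes v :: "real fps"
  assumes "fps_nth v 0 = 0"
      and "fps_X = v / (1 + v + v ^ 2)"
  shows "fps_to_fls (Abs_fps (\<lambda>n. real (b_count n))) =
           (1 + fps_to_fls v + (fps_to_fls v) ^ 2) * (1 - (fps_to_fls v) powi (-2))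
             * fps_to_fls (\<Sum>h. (-1) ^ h * v ^ (Suc h) / (1 - v ^ (Suc h)))
         + (1 + fps_to_fls v) * (1 + fps_to_fls v + (fps_to_fls v) ^ 2) / fps_to_fls v"
proof -
  have v0: "v $ 0 = 0"
    using assms(1) by simp
  have "(1 + v + v^2) $ 0 \<noteq> 0"
    using v0 by (simp add: startsby_zero_power)
  then have X: "fps_X * (1 + v + v^2) = v"
    unfolding assms(2) by (simp add: fps_is_unit_iff unit_div_mult_self)
  define V where "V = fps_to_fls v"
  define B where "B = fps_to_fls (Abs_fps (\<lambda>n. real (b_count n)))"
  define S where "S = fps_to_fls (\<Sum>h. (-1) ^ h * v ^ (Suc h) / (1 - v ^ (Suc h)))"
  have "V \<noteq> 0"
    using X by (auto simp: V_def)
  moreover have "V^2 * B = (1 + V + V^2) * (V^2 - 1) * S + (1 + V) * (1 + V + V^2) * V"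
    using arg_cong[OF b_gf_identity[OF v0 X], of fps_to_fls]
    by (simp add: V_def B_def S_def fls_times_fps_to_fls fps_to_fls_power)
  ultimately have "B = ((1 + V + V^2) * (V^2 - 1) * S + (1 + V) * (1 + V + V^2) * V) / V^2"
    by (simp add: eq_divide_eq mult.commute)
  also have "\<dots> = (1 + V + V^2) * (1 - V powi (-2)) * S + (1 + V) * (1 + V + V^2) / V"
    using \<open>V \<noteq> 0\<close> by (simp add: power_int_minus field_simps) (simp add: algebra_simps eval_nat_numeral)
  finally show ?thesis
    unfolding V_def B_def S_def .
qed

end
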